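(* Let $S$ be a finite set of red and blue points in the plane in general position, containing at least one point of each color. Then every minimum bichromatic spanning tree of $S$ is quasi-plane, i.e., it does not contain three edges that pairwise cross.
   Context: A set of points is in general position if no three of them are collinear. A bichromatic spanning tree of a set $S$ of red and blue points is a spanning tree on vertex set $S$, drawn with straight-line segment edges, in which every edge has one red and one blue endpoint. A minimum bichromatic spanning tree (MinBST) is a bichromatic spanning tree of minimum total Euclidean edge length. Two edges (segments) cross if they share a point that is interior to both segments. A straight-line drawing is quasi-plane if no three of its edges pairwise cross. *)

theory Defs
  imports "HOL-Analysis.Analysis"
begin

type_synonym point = "real^2"

text \<open>A bichromatic edge is represented as a
pair (r, b) with r red and b blue, drawn as the straight segment from r to b.\<close>

definition general_position :: "point set \<Rightarrow> bool" where
  "general_position S \<longleftrightarrow>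
     (\<forall>a\<in>S. \<forall>b\<in>S. \<forall>c\<in>S. a \<noteq> b \<and> a \<noteq> c \<and> b \<noteq> c \<longrightarrow> \<not> collinear {a, b, c})"

definition adj :: "(point \<times> point) set \<Rightarrow> point \<Rightarrow> point \<Rightarrow> bool" where
  "adj T u v \<longleftrightarrow> (u, v) \<in> T \<or> (v, u) \<in> T"

definition graph_connected :: "point set \<Rightarrow> (point \<times> point) set \<Rightarrow> bool" where
  "graph_connected V T \<longleftrightarrow> (\<forall>u\<in>V. \<forall>v\<in>V. (u, v) \<in> {(x, y). adj T x y}\<^sup>*)"

definition has_cycle :: "(point \<times> point) set \<Rightarrow> bool" where
  "has_cycle T \<longleftrightarrow> (\<exists>vs. length vs \<ge> 3 \<and> distinct vs \<and>
      (\<forall>i < length vs. adj T (vs ! i) (vs ! ((i + 1) mod length vs))))"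

definition bichromatic_spanning_tree ::
  "point set \<Rightarrow> point set \<Rightarrow> (point \<times> point) set \<Rightarrow> bool" where
  "bichromatic_spanning_tree R B T \<longleftrightarrow>
     T \<subseteq> R \<times> B \<and> graph_connected (R \<union> B) T \<and> \<not> has_cycle T"

definition tree_length :: "(point \<times> point) set \<Rightarrow> real" where
  "tree_length T = (\<Sum>(r, b)\<in>T. dist r b)"

definition min_bichromatic_spanning_tree ::
  "point set \<Rightarrow> point set \<Rightarrow> (point \<times> point) set \<Rightarrow> bool" where
  "min_bichromatic_spanning_tree R B T \<longleftrightarrow>
     bichromatic_spanning_tree R B T \<and>
     (\<forall>T'. bichromatic_spanning_tree R B T' \<longrightarrow> tree_length T \<le> tree_length T')"

definition edges_cross :: "point \<times> point \<Rightarrow> point \<times> point \<Rightarrow> bool" where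
  "edges_cross e f \<longleftrightarrow>
     open_segment (fst e) (snd e) \<inter> open_segment (fst f) (snd f) \<noteq> {}"

definition quasi_plane :: "(point \<times> point) set \<Rightarrow> bool" where
  "quasi_plane T \<longleftrightarrow> \<not> (\<exists>e1\<in>T. \<exists>e2\<in>T. \<exists>e3\<in>T. e1 \<noteq> e2 \<and> e1 \<noteq> e3 \<and> e2 \<noteq> e3 \<and>
      edges_cross e1 e2 \<and> edges_cross e1 e3 \<and> edges_cross e2 e3)"

end

theory Submission
  imports Defs "HOL-Library.Transitive_Closure_Table"
begin

text \<open>Suppose a, b, c are pairwise crossing edges of a minimum bichromatic spanning tree T.
  By general position, exchanging the blue endpoints of two crossing edges strictly shortens them,
  and so does rotating the blue endpoints of all three (route each new segment through the
  crossing points). Against this stands the cut property: an edge e of T is no longer than any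
  red-blue pair separated by T - e. For a swap of e and f this forces f to lie on the red side
  of e exactly when e lies on the blue side of f. These three relations are inconsistent unless
  one of the edges lies on the tree path between the other two, and in that configuration the
  cut property bounds each edge by one of the rotated pairs, contradicting the strict shortening
  of the rotation.\<close>

definition conn :: "(point \<times> point) set \<Rightarrow> point \<Rightarrow> point \<Rightarrow> bool" where
  "conn G = (adj G)\<^sup>*\<^sup>*"

lemma graph_connected_conn: "graph_connected V T \<longleftrightarrow> (\<forall>u\<in>V. \<forall>v\<in>V. conn T u v)"
  by (simp add: graph_connected_def conn_def rtrancl_def)

lemma conn_refl [simp]: "conn G u u"
  by (simp add: conn_def)

lemma conn_edge: "adj G u v \<Longrightarrow> conn G u v"
  by (simp add: conn_def)

lemma conn_trans: "conn G u v \<Longrightarrow> conn G v w \<Longrightarrow> conn G u w"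
  unfolding conn_def by (rule rtranclp_trans)

lemma conn_sym: "conn G u v \<Longrightarrow> conn G v u"
proof -
  have "symp (adj G)"
    by (auto intro: sympI simp: adj_def)
  then show "conn G u v \<Longrightarrow> conn G v u"
    unfolding conn_def by (blast dest: symp_rtranclp sympD)
qed

lemma conn_mono: "G \<subseteq> H \<Longrightarrow> conn G u v \<Longrightarrow> conn H u v"
  unfolding conn_def by (erule rtranclp_mono[THEN predicate2D, rotated]) (auto simp: adj_def)

lemma has_cycle_mono: "G \<subseteq> H \<Longrightarrow> has_cycle G \<Longrightarrow> has_cycle H"
  unfolding has_cycle_def adj_def by blast

lemma conn_Diff_edge:
  assumes "conn G u w"
  shows "conn (G - {g}) u w \<or> conn (G - {g}) u (fst g) \<or> conn (G - {g}) u (snd g)"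
proof -
  from assms have "(adj G)\<^sup>*\<^sup>* u w"
    by (simp add: conn_def)
  then show ?thesis
  proof (induction rule: converse_rtranclp_induct)
    case (step u y)
    show ?case
    proof (cases "adj (G - {g}) u y")
      case True
      then show ?thesis
        using step.IH conn_edge conn_trans by blast
    next
      case False
      with step.hyps(1) have "u = fst g \<or> u = snd g"
        by (auto simp: adj_def)
      then show ?thesis
        by auto
    qed
  qed simp
qed

lemma conn_chain:
  assumes "\<And>j. Suc j < length ws \<Longrightarrow> adj G (ws ! j) (ws ! Suc j)" and "k < length ws"
  shows "conn G (ws ! 0) (ws ! k)"
  using assms(2)
proof (induction k)
  case (Suc k)
  then show ?case
    using assms(1)[of k] conn_edge conn_trans by (meson Suc_lessD)
qed simp

lemma has_cycle_if_conn_Diff_edge: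
  assumes e: "(u, v) \<in> G" and "(v, u) \<notin> G" "u \<noteq> v"
    and c: "conn (G - {(u, v)}) u v"
  shows "has_cycle G"
proof -
  let ?r = "adj (G - {(u, v)})"
  obtain xs0 where "rtrancl_path ?r u xs0 v"
    using c by (auto simp: conn_def rtranclp_eq_rtrancl_path)
  then obtain xs where p: "rtrancl_path ?r u xs v" and d: "distinct (u # xs)"
    by (rule rtrancl_path_distinct)
  have "xs \<noteq> []"
    using p \<open>u \<noteq> v\<close> by (auto elim: rtrancl_path.cases)
  have "length xs \<ge> 2"
  proof (rule ccontr)
    assume "\<not> ?thesis"
    with \<open>xs \<noteq> []\<close> have "xs = [v]"
      using rtrancl_path_last[OF p] by (cases xs) (auto simp: Suc_le_eq)
    then have "?r u v"
      using rtrancl_path_nth[OF p, of 0] by simp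
    with assms(2) show False
      by (auto simp: adj_def)
  qed
  define vs where "vs = u # xs"
  have last_vs: "vs ! length xs = v"
    using rtrancl_path_last[OF p \<open>xs \<noteq> []\<close>] \<open>xs \<noteq> []\<close> by (simp add: vs_def last_conv_nth)
  show ?thesis
    unfolding has_cycle_def
  proof (intro exI[of _ vs] conjI allI impI)
    show "3 \<le> length vs" "distinct vs"
      using \<open>length xs \<ge> 2\<close> d by (simp_all add: vs_def)
    fix i assume i: "i < length vs"
    show "adj G (vs ! i) (vs ! ((i + 1) mod length vs))"
    proof (cases "i < length xs")
      case True
      then have "?r (vs ! i) (xs ! i)"
        using rtrancl_path_nth[OF p] by (simp add: vs_def)
      then show ?thesis
        using True adj_def by (auto simp: vs_def)
    next
      case False
      then have "i = length xs"
        using i by (simp add: vs_def)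
      then show ?thesis
        using last_vs e by (simp add: adj_def vs_def)
    qed
  qed
qed

lemma adj_Diff_edge:
  "adj G a b \<Longrightarrow> {a, b} \<noteq> {fst f, snd f} \<Longrightarrow> adj (G - {f}) a b"
  by (cases f) (auto simp: adj_def)

lemma has_cycle_Diff_edge:
  assumes "has_cycle G"
  shows "has_cycle (G - {f}) \<or> conn (G - {f}) (fst f) (snd f)"
proof -
  obtain vs where l3: "length vs \<ge> 3" and dv: "distinct vs"
    and ad: "\<And>i. i < length vs \<Longrightarrow> adj G (vs ! i) (vs ! ((i + 1) mod length vs))"
    using assms unfolding has_cycle_def by blast
  define n where "n = length vs"
  show ?thesis
  proof (cases "\<exists>i < n. {vs ! i, vs ! ((i + 1) mod n)} = {fst f, snd f}")
    case False
    then have "has_cycle (G - {f})"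
      unfolding has_cycle_def using l3 dv ad adj_Diff_edge by (metis n_def)
    then show ?thesis ..
  next
    case True
    then obtain i where i: "i < n" and f: "{vs ! i, vs ! ((i + 1) mod n)} = {fst f, snd f}"
      by blast
    \<comment> \<open>after this rotation f joins the last vertex to the first, so the path along ws avoids f\<close>
    define ws where "ws = rotate (Suc i) vs"
    have len: "length ws = n" and dw: "distinct ws"
      using dv by (simp_all add: ws_def n_def)
    have ws_nth: "ws ! j = vs ! ((Suc i + j) mod n)" if "j < n" for j
      using that nth_rotate[of j vs "Suc i"] by (simp add: ws_def n_def add.commute)
    have "0 < n" "n - 1 < n" "Suc i + (n - 1) = i + n"
      using l3 by (auto simp: n_def)
    then have ends: "{ws ! (n - 1), ws ! 0} = {fst f, snd f}"
      using f i ws_nth[of 0] ws_nth[of "n - 1"] by simp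
    have "adj (G - {f}) (ws ! j) (ws ! Suc j)" if j: "Suc j < n" for j
    proof (rule adj_Diff_edge)
      have "(Suc i + Suc j) mod n = ((Suc i + j) mod n + 1) mod n"
        by (simp add: mod_Suc_eq)
      then show "adj G (ws ! j) (ws ! Suc j)"
        using ad[of "(Suc i + j) mod n"] ws_nth[of j] ws_nth[of "Suc j"] j \<open>0 < n\<close>
        by (simp add: n_def)
      have "inj_on (nth ws) {..<n}"
        using dw len by (simp add: inj_on_nth)
      moreover have "{j, Suc j} \<noteq> {n - 1, 0}"
        using j l3 by (auto simp: n_def doubleton_eq_iff)
      ultimately have "nth ws ` {j, Suc j} \<noteq> nth ws ` {n - 1, 0}"
        using j \<open>n - 1 < n\<close> by (subst inj_on_image_eq_iff) auto
      then show "{ws ! j, ws ! Suc j} \<noteq> {fst f, snd f}"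
        using ends by (simp add: insert_commute)
    qed
    then have "conn (G - {f}) (ws ! 0) (ws ! (n - 1))"
      using conn_chain[of ws] len \<open>n - 1 < n\<close> by simp
    then show ?thesis
      using ends conn_sym by (auto simp: doubleton_eq_iff)
  qed
qed

definition edge_length :: "point \<times> point \<Rightarrow> real" where
  "edge_length e = dist (fst e) (snd e)"

lemma tree_length_remove:
  assumes "finite T" "e \<in> T"
  shows "tree_length T = edge_length e + tree_length (T - {e})"
proof -
  have "tree_length T = (\<Sum>e\<in>T. edge_length e)" for T
    by (simp add: tree_length_def edge_length_def split_def)
  then show ?thesis
    using sum.remove[OF assms] by metis
qed

definition red_side :: "(point \<times> point) set \<Rightarrow> point \<times> point \<Rightarrow> point \<Rightarrow> bool" where
  "red_side T e v \<longleftrightarrow> conn (T - {e}) (fst e) v"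

text \<open>Both endpoints of an edge f \<noteq> e of T lie on the same side of e (lemma red_side_other_edge),
  so comparing first endpoints says whether e lies on the tree path between the edges f and g.\<close>
definition separates ::
  "(point \<times> point) set \<Rightarrow> point \<times> point \<Rightarrow> point \<times> point \<Rightarrow> point \<times> point \<Rightarrow> bool" where
  "separates T e f g \<longleftrightarrow> red_side T e (fst f) \<noteq> red_side T e (fst g)"

lemma red_side_fst [simp]: "red_side T e (fst e)"
  by (simp add: red_side_def)

lemma red_side_conn_eq: "conn (T - {e}) v w \<Longrightarrow> red_side T e v = red_side T e w"
  unfolding red_side_def using conn_sym conn_trans by blast

lemma red_side_other_edge:
  assumes "f \<in> T" "f \<noteq> e"
  shows "red_side T e (snd f) = red_side T e (fst f)"
  using assms by (intro red_side_conn_eq conn_edge) (auto simp: adj_def)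

locale bichromatic_tree =
  fixes R B :: "point set" and T :: "(point \<times> point) set"
  assumes disjoint: "R \<inter> B = {}"
    and spanning_tree: "bichromatic_spanning_tree R B T"
begin

lemma edges_bichromatic: "T \<subseteq> R \<times> B"
  using spanning_tree by (simp add: bichromatic_spanning_tree_def)

lemma edge_ends:
  assumes "e \<in> T"
  shows "fst e \<in> R" "snd e \<in> B"
  using assms edges_bichromatic by auto

lemma connected: "u \<in> R \<union> B \<Longrightarrow> v \<in> R \<union> B \<Longrightarrow> conn T u v"
  using spanning_tree by (simp add: bichromatic_spanning_tree_def graph_connected_conn)

lemma acyclic: "\<not> has_cycle T"
  using spanning_tree by (simp add: bichromatic_spanning_tree_def)

lemma not_red_side_snd:
  assumes "e \<in> T"
  shows "\<not> red_side T e (snd e)"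
proof
  assume "red_side T e (snd e)"
  then have "has_cycle T"
    using assms edge_ends[OF assms] disjoint edges_bichromatic
    by (intro has_cycle_if_conn_Diff_edge[of "fst e" "snd e"]) (auto simp: red_side_def)
  with acyclic show False ..
qed

lemma conn_snd_if_not_red_side:
  assumes "e \<in> T" "v \<in> R \<union> B" "\<not> red_side T e v"
  shows "conn (T - {e}) (snd e) v"
proof -
  have "conn T v (fst e)"
    using assms(2) edge_ends[OF assms(1)] connected by blast
  then show ?thesis
    using conn_Diff_edge[of T v "fst e" e] assms(3) conn_sym by (auto simp: red_side_def)
qed

lemma exchange_spanning_tree:
  assumes e: "e \<in> T" and "r \<in> R" "b \<in> B" and sides: "red_side T e r \<noteq> red_side T e b"
    and new: "(r, b) \<notin> T"
  shows "bichromatic_spanning_tree R B (insert (r, b) (T - {e}))" (is "bichromatic_spanning_tree R B ?T'")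
proof -
  have sub: "T - {e} \<subseteq> ?T'"
    by auto
  obtain p q where pq: "adj ?T' p q" "red_side T e p" "q \<in> R \<union> B" "\<not> red_side T e q"
    using sides \<open>r \<in> R\<close> \<open>b \<in> B\<close> by (cases "red_side T e r") (auto simp: adj_def)
  have "conn ?T' (fst e) (snd e)"
  proof -
    have "conn ?T' (fst e) p" "conn ?T' (snd e) q"
      using pq conn_snd_if_not_red_side[OF e] conn_mono[OF sub] by (auto simp: red_side_def)
    then show ?thesis
      using conn_edge[OF pq(1)] conn_sym conn_trans by blast
  qed
  then have "conn ?T' (fst e) v" if "v \<in> R \<union> B" for v
    using that conn_snd_if_not_red_side[OF e] conn_mono[OF sub] conn_trans
    by (cases "red_side T e v") (auto simp: red_side_def)
  then have "graph_connected (R \<union> B) ?T'"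
    unfolding graph_connected_conn using conn_sym conn_trans by blast
  moreover have "\<not> has_cycle ?T'"
  proof
    assume "has_cycle ?T'"
    moreover have "?T' - {(r, b)} = T - {e}"
      using new by auto
    ultimately have "has_cycle (T - {e}) \<or> conn (T - {e}) r b"
      using has_cycle_Diff_edge[of ?T' "(r, b)"] by simp
    then show False
      using acyclic has_cycle_mono[of "T - {e}" T] sides red_side_conn_eq by blast
  qed
  moreover have "?T' \<subseteq> R \<times> B"
    using edges_bichromatic \<open>r \<in> R\<close> \<open>b \<in> B\<close> by auto
  ultimately show ?thesis
    by (simp add: bichromatic_spanning_tree_def)
qed

end

locale min_bichromatic_tree = bichromatic_tree +
  assumes finite: "finite R" "finite B"
    and minimal: "min_bichromatic_spanning_tree R B T"
begin

lemma cut_property: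
  assumes e: "e \<in> T" and "r \<in> R" "b \<in> B" and sides: "red_side T e r \<noteq> red_side T e b"
  shows "edge_length e \<le> dist r b"
proof (cases "(r, b) \<in> T")
  case True
  have "e = (r, b)"
    using red_side_other_edge[OF True, of e] sides by (metis fst_conv snd_conv)
  then show ?thesis
    by (simp add: edge_length_def)
next
  case False
  let ?T' = "insert (r, b) (T - {e})"
  have "finite T"
    using finite edges_bichromatic finite_subset by blast
  have "tree_length T \<le> tree_length ?T'"
    using minimal exchange_spanning_tree[OF assms False]
    by (simp add: min_bichromatic_spanning_tree_def)
  also have "tree_length ?T' = dist r b + tree_length (T - {e})"
    using tree_length_remove[of ?T' "(r, b)"] \<open>finite T\<close> False by (simp add: edge_length_def)
  finally show ?thesis
    using tree_length_remove[OF \<open>finite T\<close> e] by simp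
qed

end

definition swap_shortens :: "point \<times> point \<Rightarrow> point \<times> point \<Rightarrow> bool" where
  "swap_shortens e f \<longleftrightarrow>
     dist (fst e) (snd f) + dist (fst f) (snd e) < edge_length e + edge_length f"

definition rotation_shortens :: "point \<times> point \<Rightarrow> point \<times> point \<Rightarrow> point \<times> point \<Rightarrow> bool" where
  "rotation_shortens a b c \<longleftrightarrow>
     dist (fst a) (snd b) + dist (fst b) (snd c) + dist (fst c) (snd a)
       < edge_length a + edge_length b + edge_length c"

context min_bichromatic_tree
begin

lemma red_sides_differ_if_swap_shortens:
  assumes "e \<in> T" "f \<in> T" "e \<noteq> f" "swap_shortens e f"
  shows "red_side T e (fst f) \<noteq> red_side T f (fst e)"
proof
  assume same: "red_side T e (fst f) = red_side T f (fst e)"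
  have other: "red_side T e (snd f) = red_side T e (fst f)" "red_side T f (snd e) = red_side T f (fst e)"
    using red_side_other_edge assms(1-3) by auto
  have "edge_length e + edge_length f \<le> dist (fst e) (snd f) + dist (fst f) (snd e)"
  proof (cases "red_side T e (fst f)")
    case True
    then have "edge_length e \<le> dist (fst f) (snd e)" "edge_length f \<le> dist (fst e) (snd f)"
      using cut_property edge_ends not_red_side_snd assms(1,2) same by metis+
    then show ?thesis
      by simp
  next
    case False
    then have "edge_length e \<le> dist (fst e) (snd f)" "edge_length f \<le> dist (fst f) (snd e)"
      using cut_property edge_ends red_side_fst assms(1,2) same other by metis+
    then show ?thesis
      by simp
  qed
  with assms(4) show False
    by (simp add: swap_shortens_def)
qed

lemma rotation_around_separator_not_shortening:
  assumes T: "a \<in> T" "b \<in> T" "c \<in> T" and "a \<noteq> b" "a \<noteq> c"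
    and sides: "red_side T a (fst b)" "\<not> red_side T a (fst c)"
    and "swap_shortens a b" "swap_shortens a c"
  shows "\<not> rotation_shortens a c b"
proof -
  have "\<not> red_side T b (fst a)" "red_side T c (fst a)"
    using red_sides_differ_if_swap_shortens assms by fastforce+
  have other: "red_side T a (snd b) = red_side T a (fst b)" "red_side T b (snd a) = red_side T b (fst a)"
    using red_side_other_edge[of b T a] red_side_other_edge[of a T b] assms(1,2,4) by auto
  have "edge_length c \<le> dist (fst a) (snd c)"
    using cut_property edge_ends not_red_side_snd T \<open>red_side T c (fst a)\<close> by metis
  moreover have "edge_length a \<le> dist (fst c) (snd b)"
    using cut_property edge_ends T sides other by metis
  moreover have "edge_length b \<le> dist (fst b) (snd a)"
    using cut_property edge_ends red_side_fst T \<open>\<not> red_side T b (fst a)\<close> other by metis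
  ultimately show ?thesis
    by (simp add: rotation_shortens_def)
qed

lemma no_triple_of_shortening_exchanges:
  assumes T: "a \<in> T" "b \<in> T" "c \<in> T" and "distinct [a, b, c]"
    and swaps: "\<And>x y. x \<in> {a, b, c} \<Longrightarrow> y \<in> {a, b, c} \<Longrightarrow> x \<noteq> y \<Longrightarrow> swap_shortens x y"
    and rotations: "\<And>x y z. x \<in> {a, b, c} \<Longrightarrow> y \<in> {a, b, c} \<Longrightarrow> z \<in> {a, b, c} \<Longrightarrow>
      distinct [x, y, z] \<Longrightarrow> rotation_shortens x y z"
  shows False
proof -
  have no_separator: "\<not> separates T x y z"
    if xyz: "x \<in> {a, b, c}" "y \<in> {a, b, c}" "z \<in> {a, b, c}" "distinct [x, y, z]" for x y z
  proof
    assume "separates T x y z"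
    then consider "red_side T x (fst y)" "\<not> red_side T x (fst z)"
      | "red_side T x (fst z)" "\<not> red_side T x (fst y)"
      by (auto simp: separates_def)
    then show False
    proof cases
      case 1
      then show False
        using rotation_around_separator_not_shortening[of x y z] rotations[of x z y] swaps xyz T
        by auto
    next
      case 2
      then show False
        using rotation_around_separator_not_shortening[of x z y] rotations[of x y z] swaps xyz T
        by auto
    qed
  qed
  have "red_side T a (fst b) \<noteq> red_side T b (fst a)" "red_side T a (fst c) \<noteq> red_side T c (fst a)"
    "red_side T b (fst c) \<noteq> red_side T c (fst b)"
    using red_sides_differ_if_swap_shortens swaps assms(1-4) by auto
  \<comment> \<open>each edge sees the other two on one side, so these would flip a boolean three times around a cycle\<close>
  moreover have "\<not> separates T a b c" "\<not> separates T b a c" "\<not> separates T c a b"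
    using no_separator[of a b c] no_separator[of b a c] no_separator[of c a b] assms(4)
    by auto
  ultimately show False
    by (auto simp: separates_def)
qed

end

lemma dist_lt_through_open_segment:
  fixes z r b p :: "'a::euclidean_space"
  assumes "p \<in> open_segment r b" "\<not> collinear {z, r, b}"
  shows "dist z b < dist z p + dist p b"
proof (rule ccontr)
  assume "\<not> ?thesis"
  then have "between (z, b) p"
    using dist_triangle[of z b p] by (simp add: between)
  then have "collinear {z, p, b}"
    by (rule between_imp_collinear)
  moreover have "collinear {r, p, b}"
    using assms(1) open_closed_segment between_imp_collinear by (metis between_mem_segment)
  moreover have "p \<noteq> b"
    using assms(1) by (auto simp: open_segment_def)
  ultimately have "collinear {p, b, z, r}"
    using collinear_4_3[of p b z r] by (simp add: insert_commute)
  then have "collinear {z, r, b}"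
    by (rule collinear_subset) auto
  with assms(2) show False ..
qed

lemma collinear_if_open_segments_meet:
  fixes r b1 b2 x :: "'a::euclidean_space"
  assumes "x \<in> open_segment r b1" "x \<in> open_segment r b2"
  shows "collinear {r, b1, b2}"
proof -
  have "collinear {x, r, b1}" "collinear {x, r, b2}"
    using assms open_closed_segment between_imp_collinear
    by (metis between_mem_segment insert_commute)+
  moreover have "x \<noteq> r"
    using assms(1) by (auto simp: open_segment_def)
  ultimately have "collinear {x, r, b1, b2}"
    by (simp add: collinear_4_3)
  then show ?thesis
    by (rule collinear_subset) auto
qed

lemma dist_open_segment_split:
  fixes x y p :: "'a::euclidean_space"
  assumes "p \<in> open_segment x y"
  shows "dist x y = dist x p + dist p y"
  using assms open_closed_segment between between_mem_segment by blast

lemma dist_closed_segment_order: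
  fixes x y p q :: "'a::euclidean_space"
  assumes "p \<in> closed_segment x y" "q \<in> closed_segment x y"
  shows "(dist x q = dist x p + dist p q \<and> dist p y = dist p q + dist q y) \<or>
         (dist x p = dist x q + dist q p \<and> dist q y = dist q p + dist p y)"
proof -
  obtain u where u: "0 \<le> u" "u \<le> 1" "p = x + u *\<^sub>R (y - x)"
    using assms(1) by (auto simp: closed_segment_def algebra_simps)
  obtain v where v: "0 \<le> v" "v \<le> 1" "q = x + v *\<^sub>R (y - x)"
    using assms(2) by (auto simp: closed_segment_def algebra_simps)
  have d: "dist (x + s *\<^sub>R (y - x)) (x + t *\<^sub>R (y - x)) = \<bar>s - t\<bar> * norm (y - x)" for s t
  proof -
    have "(x + s *\<^sub>R (y - x)) - (x + t *\<^sub>R (y - x)) = (s - t) *\<^sub>R (y - x)"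
      by (simp add: algebra_simps)
    then show ?thesis
      by (simp add: dist_norm)
  qed
  have "x = x + 0 *\<^sub>R (y - x)" "y = x + 1 *\<^sub>R (y - x)"
    by simp_all
  then have "dist x p = u * norm (y - x)" "dist x q = v * norm (y - x)"
    "dist p y = (1 - u) * norm (y - x)" "dist q y = (1 - v) * norm (y - x)"
    "dist p q = \<bar>u - v\<bar> * norm (y - x)" "dist q p = \<bar>u - v\<bar> * norm (y - x)"
    using d u v by (metis abs_of_nonneg abs_minus_commute diff_ge_0_iff_ge diff_zero)+
  then show ?thesis
    by (cases "u \<le> v") (simp_all add: algebra_simps)
qed

lemma crossing_segments_swap_shorter:
  fixes r1 b1 r2 b2 x :: "'a::euclidean_space"
  assumes "x \<in> open_segment r1 b1" "x \<in> open_segment r2 b2"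
    "\<not> collinear {r1, r2, b2}" "\<not> collinear {r2, r1, b1}"
  shows "dist r1 b2 + dist r2 b1 < dist r1 b1 + dist r2 b2"
  using dist_lt_through_open_segment[OF assms(2,3)] dist_lt_through_open_segment[OF assms(1,4)]
    dist_open_segment_split[OF assms(1)] dist_open_segment_split[OF assms(2)] by linarith

text \<open>Each new segment is routed along the old ones through the crossing points. Which route
  is short depends on the order of the two crossing points on each old segment; in each of the
  eight cases the routes add up to less than the three old segments.\<close>
lemma crossing_segments_rotation_shorter:
  fixes ra ba rb bb rc bc pab pbc pca :: "'a::euclidean_space"
  assumes ab: "pab \<in> open_segment ra ba" "pab \<in> open_segment rb bb"
    and bc: "pbc \<in> open_segment rb bb" "pbc \<in> open_segment rc bc"
    and ca: "pca \<in> open_segment rc bc" "pca \<in> open_segment ra ba"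
    and nab: "\<not> collinear {ra, rb, bb}" and nbc: "\<not> collinear {rb, rc, bc}"
    and nca: "\<not> collinear {rc, ra, ba}"
  shows "dist ra bb + dist rb bc + dist rc ba < dist ra ba + dist rb bb + dist rc bc"
proof -
  have split: "dist ra ba = dist ra pab + dist pab ba" "dist ra ba = dist ra pca + dist pca ba"
    "dist rb bb = dist rb pab + dist pab bb" "dist rb bb = dist rb pbc + dist pbc bb"
    "dist rc bc = dist rc pbc + dist pbc bc" "dist rc bc = dist rc pca + dist pca bc"
    using dist_open_segment_split ab bc ca by blast+
  have "(dist ra pca = dist ra pab + dist pab pca \<and> dist pab ba = dist pab pca + dist pca ba) \<or>
      (dist ra pab = dist ra pca + dist pca pab \<and> dist pca ba = dist pca pab + dist pab ba)"
    "(dist rb pbc = dist rb pab + dist pab pbc \<and> dist pab bb = dist pab pbc + dist pbc bb) \<or>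
      (dist rb pab = dist rb pbc + dist pbc pab \<and> dist pbc bb = dist pbc pab + dist pab bb)"
    "(dist rc pca = dist rc pbc + dist pbc pca \<and> dist pbc bc = dist pbc pca + dist pca bc) \<or>
      (dist rc pbc = dist rc pca + dist pca pbc \<and> dist pca bc = dist pca pbc + dist pbc bc)"
    using dist_closed_segment_order ab bc ca open_closed_segment by blast+
  moreover have "dist pab pbc = dist pbc pab" "dist pbc pca = dist pca pbc" "dist pab pca = dist pca pab"
    by (simp_all add: dist_commute)
  moreover have "dist ra bb < dist ra pab + dist pab bb" "dist ra bb < dist ra pbc + dist pbc bb"
    "dist rb bc < dist rb pbc + dist pbc bc" "dist rb bc < dist rb pca + dist pca bc"
    "dist rc ba < dist rc pca + dist pca ba" "dist rc ba < dist rc pab + dist pab ba"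
    using dist_lt_through_open_segment ab bc ca nab nbc nca by blast+
  moreover have "dist ra pbc \<le> dist ra pca + dist pca pbc" "dist ra pbc \<le> dist ra pab + dist pab pbc"
    "dist rb pca \<le> dist rb pab + dist pab pca" "dist rb pca \<le> dist rb pbc + dist pbc pca"
    "dist rc pab \<le> dist rc pbc + dist pbc pab" "dist rc pab \<le> dist rc pca + dist pca pab"
    by (rule dist_triangle)+
  ultimately show ?thesis
    using split by linarith
qed

lemma edges_cross_commute: "edges_cross e f = edges_cross f e"
  by (auto simp: edges_cross_def)

lemma crossing_edges_noncollinear:
  assumes gp: "general_position (R \<union> B)" and "R \<inter> B = {}"
    and "e \<in> R \<times> B" "f \<in> R \<times> B" "e \<noteq> f" and cross: "edges_cross e f"
  shows "\<not> collinear {fst e, fst f, snd f}"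
proof -
  have ends: "fst e \<in> R" "fst f \<in> R" "snd e \<in> B" "snd f \<in> B"
    using assms(3,4) by auto
  then have bichromatic: "fst e \<noteq> snd e" "fst e \<noteq> snd f" "fst f \<noteq> snd f"
    using \<open>R \<inter> B = {}\<close> by auto
  have "fst e \<noteq> fst f"
  proof
    assume same: "fst e = fst f"
    then have "snd e \<noteq> snd f"
      using \<open>e \<noteq> f\<close> by (simp add: prod_eq_iff)
    obtain x where "x \<in> open_segment (fst e) (snd e)" "x \<in> open_segment (fst e) (snd f)"
      using cross same by (auto simp: edges_cross_def)
    then have "collinear {fst e, snd e, snd f}"
      by (rule collinear_if_open_segments_meet)
    with gp ends bichromatic \<open>snd e \<noteq> snd f\<close> show False
      unfolding general_position_def by blast
  qed
  with gp ends bichromatic show ?thesis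
    unfolding general_position_def by blast
qed

lemma crossing_edges_swap_shortens:
  assumes "general_position (R \<union> B)" "R \<inter> B = {}"
    and "e \<in> R \<times> B" "f \<in> R \<times> B" "e \<noteq> f" "edges_cross e f"
  shows "swap_shortens e f"
proof -
  obtain x where "x \<in> open_segment (fst e) (snd e)" "x \<in> open_segment (fst f) (snd f)"
    using assms(6) by (auto simp: edges_cross_def)
  moreover have "\<not> collinear {fst e, fst f, snd f}" "\<not> collinear {fst f, fst e, snd e}"
    using crossing_edges_noncollinear[OF assms(1,2)] assms(3-6) edges_cross_commute by metis+
  ultimately show ?thesis
    unfolding swap_shortens_def edge_length_def by (rule crossing_segments_swap_shorter)
qed

lemma crossing_edges_rotation_shortens:
  assumes "general_position (R \<union> B)" "R \<inter> B = {}"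
    and "a \<in> R \<times> B" "b \<in> R \<times> B" "c \<in> R \<times> B" "distinct [a, b, c]"
    and "edges_cross a b" "edges_cross b c" "edges_cross c a"
  shows "rotation_shortens a b c"
proof -
  obtain pab pbc pca
    where "pab \<in> open_segment (fst a) (snd a)" "pab \<in> open_segment (fst b) (snd b)"
      and "pbc \<in> open_segment (fst b) (snd b)" "pbc \<in> open_segment (fst c) (snd c)"
      and "pca \<in> open_segment (fst c) (snd c)" "pca \<in> open_segment (fst a) (snd a)"
    using assms(7-9) by (auto simp: edges_cross_def)
  moreover have "\<not> collinear {fst a, fst b, snd b}" "\<not> collinear {fst b, fst c, snd c}"
    "\<not> collinear {fst c, fst a, snd a}"
    using crossing_edges_noncollinear[OF assms(1,2)] assms(3-9) by auto
  ultimately show ?thesis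
    unfolding rotation_shortens_def edge_length_def by (rule crossing_segments_rotation_shorter)
qed

lemma pairwise_crossing_edges_shorten:
  assumes "general_position (R \<union> B)" "R \<inter> B = {}" and "E \<subseteq> R \<times> B"
    and cross: "\<And>x y. x \<in> E \<Longrightarrow> y \<in> E \<Longrightarrow> x \<noteq> y \<Longrightarrow> edges_cross x y"
  shows "\<And>x y. x \<in> E \<Longrightarrow> y \<in> E \<Longrightarrow> x \<noteq> y \<Longrightarrow> swap_shortens x y"
    and "\<And>x y z. x \<in> E \<Longrightarrow> y \<in> E \<Longrightarrow> z \<in> E \<Longrightarrow> distinct [x, y, z] \<Longrightarrow> rotation_shortens x y z"
proof -
  show "swap_shortens x y" if "x \<in> E" "y \<in> E" "x \<noteq> y" for x y
    using crossing_edges_swap_shortens[OF assms(1,2)] \<open>E \<subseteq> R \<times> B\<close> cross that by blast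
  show "rotation_shortens x y z" if "x \<in> E" "y \<in> E" "z \<in> E" "distinct [x, y, z]" for x y z
    using that \<open>E \<subseteq> R \<times> B\<close>
    by (intro crossing_edges_rotation_shortens[OF assms(1,2)] cross) auto
qed

theorem theorem4:
  fixes R B :: "point set" and T :: "(point \<times> point) set"
  assumes "finite R" and "finite B" and "R \<inter> B = {}"
    and "R \<noteq> {}" and "B \<noteq> {}"
    and "general_position (R \<union> B)"
    and "min_bichromatic_spanning_tree R B T"
  shows "quasi_plane T"
  unfolding quasi_plane_def
proof
  assume "\<exists>e1\<in>T. \<exists>e2\<in>T. \<exists>e3\<in>T. e1 \<noteq> e2 \<and> e1 \<noteq> e3 \<and> e2 \<noteq> e3 \<and>
      edges_cross e1 e2 \<and> edges_cross e1 e3 \<and> edges_cross e2 e3"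
  then obtain a b c where T: "a \<in> T" "b \<in> T" "c \<in> T" and abc: "distinct [a, b, c]"
    and "edges_cross a b" "edges_cross a c" "edges_cross b c"
    by (metis distinct_length_2_or_more distinct_singleton)
  then have cross: "edges_cross x y" if "x \<in> {a, b, c}" "y \<in> {a, b, c}" "x \<noteq> y" for x y
    using that edges_cross_commute by blast
  interpret min_bichromatic_tree R B T
    using assms by unfold_locales (simp_all add: min_bichromatic_spanning_tree_def)
  have "{a, b, c} \<subseteq> R \<times> B"
    using T edges_bichromatic by auto
  from pairwise_crossing_edges_shorten[OF assms(6,3) this cross]
  show False
    by (rule no_triple_of_shortening_exchanges[OF T abc])
qed

end
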